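(* Let $P$ be a poset on $[n]$ whose labeling is natural, and let $x_1,\dots,x_n$ be strictly positive reals. The continuous time Markov chain given by the uniform promotion graph of $P$ has the uniform stationary distribution; that is, with $M$ its transition matrix, $\sum_{\pi\in\mathcal{L}(P)}M(\pi',\pi)=0$ for every $\pi'\in\mathcal{L}(P)$.
   Context: Linear extensions: $\mathcal{L}(P)=\{\pi\in S_n : i\prec j \text{ in } P \Rightarrow \pi^{-1}_i<\pi^{-1}_j\}$, in one-line notation $\pi=\pi_1\cdots\pi_n$. For $1\le i<n$, $\pi\tau_i$ swaps $\pi_i,\pi_{i+1}$ if they are incomparable in $P$ and is $\pi$ otherwise; operators act on the right, $\pi(\sigma\tau)=(\pi\sigma)\tau$. Extended promotion: $\partial_j=\tau_j\tau_{j+1}\cdots\tau_{n-1}$, $1\le j\le n$. Uniform promotion graph: vertex set $\mathcal{L}(P)$, and for each $\pi$ and $j\in[n]$ a directed edge $\pi\to\pi\partial_j$ of weight $x_j$. Transition matrix $M$: for $\pi'\ne\pi$, $M(\pi',\pi)$ is the sum of weights of edges $\pi\to\pi'$; $M(\pi,\pi)$ is minus the sum of weights of edges $\pi\to\pi'$ with $\pi'\ne\pi$. *)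

theory Defs
  imports Complex_Main
begin

text \<open>Permutations in one-line notation are lists; position i (1-indexed) is list index i-1.\<close>

definition natural_poset :: "nat \<Rightarrow> nat rel \<Rightarrow> bool" where
  "natural_poset n R \<longleftrightarrow> partial_order_on {1..n} R \<and> (\<forall>i j. (i, j) \<in> R \<longrightarrow> i \<le> j)"

definition lin_ext :: "nat \<Rightarrow> nat rel \<Rightarrow> nat list set" where
  "lin_ext n R = {\<pi>. distinct \<pi> \<and> set \<pi> = {1..n} \<and>
     (\<forall>a < length \<pi>. \<forall>b < length \<pi>. (\<pi> ! a, \<pi> ! b) \<in> R \<and> \<pi> ! a \<noteq> \<pi> ! b \<longrightarrow> a < b)}"

definition tau :: "nat rel \<Rightarrow> nat \<Rightarrow> nat list \<Rightarrow> nat list" where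
  "tau R i \<pi> = (let a = \<pi> ! (i - 1); b = \<pi> ! i in
     if (a, b) \<notin> R \<and> (b, a) \<notin> R then \<pi>[i - 1 := b, i := a] else \<pi>)"

text \<open>\<pi>\<partial>_j = \<pi>\<tau>_j\<tau>_{j+1}\<dots>\<tau>_{n-1} (operators act on the right).\<close>
definition ext_promo :: "nat \<Rightarrow> nat rel \<Rightarrow> nat \<Rightarrow> nat list \<Rightarrow> nat list" where
  "ext_promo n R j \<pi> = foldl (\<lambda>\<sigma> i. tau R i \<sigma>) \<pi> [j..<n]"

text \<open>Transition matrix of the uniform promotion graph: for each \<pi> and j \<in> [n] an edge
  \<pi> \<rightarrow> \<pi>\<partial>_j of weight x_j.\<close>
definition trans_matrix :: "nat \<Rightarrow> nat rel \<Rightarrow> (nat \<Rightarrow> real) \<Rightarrow> nat list \<Rightarrow> nat list \<Rightarrow> real" where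
  "trans_matrix n R x \<pi>' \<pi> =
     (if \<pi>' \<noteq> \<pi> then (\<Sum>j \<in> {j \<in> {1..n}. ext_promo n R j \<pi> = \<pi>'}. x j)
      else - (\<Sum>j \<in> {j \<in> {1..n}. ext_promo n R j \<pi> \<noteq> \<pi>}. x j))"

end

theory Submission
  imports Defs
begin

text \<open>Each \<open>\<tau>\<^sub>i\<close> is an involution preserving \<open>\<L>(P)\<close>, so every extended promotion
  \<open>\<partial>\<^sub>j\<close> permutes \<open>\<L>(P)\<close>. Writing \<open>M = \<Sum>\<^sub>j x\<^sub>j (Q\<^sub>j - I)\<close> with \<open>Q\<^sub>j\<close> the permutation
  matrix of \<open>\<partial>\<^sub>j\<close>, every column sum of \<open>M\<close> at \<open>\<pi>'\<close> is \<open>\<Sum>\<^sub>j x\<^sub>j (1 - 1) = 0\<close>.\<close>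

lemma length_lin_ext: "\<pi> \<in> lin_ext n R \<Longrightarrow> length \<pi> = n"
  unfolding lin_ext_def by (auto dest: distinct_card)

lemma finite_lin_ext: "finite (lin_ext n R)"
proof -
  have "lin_ext n R \<subseteq> {xs. set xs \<subseteq> {1..n} \<and> length xs = n}"
    using length_lin_ext unfolding lin_ext_def by auto
  then show ?thesis using finite_lists_length_eq[of "{1..n}" n] finite_subset by blast
qed

lemma tau_tau:
  assumes "1 \<le> i" "i < length \<pi>"
  shows "tau R i (tau R i \<pi>) = \<pi>"
proof (cases "(\<pi> ! (i - 1), \<pi> ! i) \<notin> R \<and> (\<pi> ! i, \<pi> ! (i - 1)) \<notin> R")
  case True
  let ?\<sigma> = "\<pi>[i - 1 := \<pi> ! i, i := \<pi> ! (i - 1)]"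
  have \<sigma>: "?\<sigma> ! (i - 1) = \<pi> ! i" "?\<sigma> ! i = \<pi> ! (i - 1)"
    using assms by (simp_all add: nth_list_update)
  have "tau R i (tau R i \<pi>) = tau R i ?\<sigma>"
    using True unfolding tau_def Let_def by simp
  also have "\<dots> = ?\<sigma>[i - 1 := \<pi> ! (i - 1), i := \<pi> ! i]"
    using True \<sigma> unfolding tau_def Let_def by auto
  also have "\<dots> = \<pi>"
    using assms by (metis list_update_id list_update_overwrite list_update_swap)
  finally show ?thesis .
next
  case False
  then show ?thesis unfolding tau_def Let_def by auto
qed

lemma tau_in_lin_ext:
  assumes \<pi>: "\<pi> \<in> lin_ext n R" and i: "1 \<le> i" "i < n"
  shows "tau R i \<pi> \<in> lin_ext n R"
proof -
  obtain k where k: "i = Suc k" using i by (cases i) auto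
  have len: "length \<pi> = n" using length_lin_ext[OF \<pi>] .
  show ?thesis
  proof (cases "(\<pi> ! k, \<pi> ! Suc k) \<notin> R \<and> (\<pi> ! Suc k, \<pi> ! k) \<notin> R")
    case False
    then show ?thesis using \<pi> k unfolding tau_def Let_def by auto
  next
    case incomparable: True
    have ord: "\<And>a b. a < n \<Longrightarrow> b < n \<Longrightarrow> (\<pi> ! a, \<pi> ! b) \<in> R \<Longrightarrow> \<pi> ! a \<noteq> \<pi> ! b \<Longrightarrow> a < b"
      using \<pi> len unfolding lin_ext_def by auto
    define \<sigma> where "\<sigma> = \<pi>[k := \<pi> ! Suc k, Suc k := \<pi> ! k]"
    define sw where "sw p = (if p = Suc k then k else if p = k then Suc k else p)" for p
    have \<sigma>_nth: "\<sigma> ! p = \<pi> ! sw p" and sw_less: "sw p < n" if "p < n" for p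
      using i k len that unfolding \<sigma>_def sw_def by (auto simp: nth_list_update)
    have "a < b" if "a < n" "b < n" "(\<sigma> ! a, \<sigma> ! b) \<in> R" "\<sigma> ! a \<noteq> \<sigma> ! b" for a b
    proof -
      have "sw a < sw b" using ord sw_less \<sigma>_nth that by metis
      moreover have "\<not> (a = Suc k \<and> b = k)"
        using incomparable that \<sigma>_nth unfolding sw_def by auto
      ultimately show ?thesis unfolding sw_def by (auto split: if_splits)
    qed
    moreover have "distinct \<sigma>" "set \<sigma> = {1..n}" "length \<sigma> = n"
      using \<pi> i k len unfolding \<sigma>_def lin_ext_def by auto
    moreover have "tau R i \<pi> = \<sigma>" using incomparable k unfolding tau_def Let_def \<sigma>_def by simp
    ultimately show ?thesis unfolding lin_ext_def by auto
  qed
qed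

lemma bij_betw_tau_lin_ext:
  assumes "1 \<le> i" "i < n"
  shows "bij_betw (tau R i) (lin_ext n R) (lin_ext n R)"
  using assms tau_in_lin_ext tau_tau length_lin_ext
  by (intro bij_betw_byWitness[where f' = "tau R i"]) auto

lemma bij_betw_foldl_tau_lin_ext:
  assumes "\<forall>i \<in> set is. 1 \<le> i \<and> i < n"
  shows "bij_betw (\<lambda>\<pi>. foldl (\<lambda>\<sigma> i. tau R i \<sigma>) \<pi> is) (lin_ext n R) (lin_ext n R)"
  using assms
proof (induction "is")
  case Nil
  then show ?case by (simp add: bij_betw_id[unfolded id_def])
next
  case (Cons i "is")
  then have "bij_betw ((\<lambda>\<pi>. foldl (\<lambda>\<sigma> i. tau R i \<sigma>) \<pi> is) \<circ> tau R i) (lin_ext n R) (lin_ext n R)"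
    using bij_betw_tau_lin_ext by (intro bij_betw_trans) auto
  then show ?case by (simp add: comp_def)
qed

lemma bij_betw_ext_promo_lin_ext:
  assumes "1 \<le> j"
  shows "bij_betw (ext_promo n R j) (lin_ext n R) (lin_ext n R)"
  unfolding ext_promo_def[abs_def] using assms by (intro bij_betw_foldl_tau_lin_ext) auto

lemma sum_fiber_bij_betw:
  fixes c :: "'b :: comm_monoid_add"
  assumes "bij_betw f A A" "finite A" "b \<in> A"
  shows "(\<Sum>a\<in>A. if f a = b then c else 0) = c"
proof -
  obtain a where "a \<in> A" "f a = b" using assms by (metis bij_betw_iff_bijections)
  with assms(1) have "{a' \<in> A. f a' = b} = {a}" by (auto simp: bij_betw_def inj_on_def)
  then show ?thesis by (simp add: sum.inter_filter[OF assms(2), symmetric])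
qed

lemma trans_matrix_eq:
  "trans_matrix n R x \<pi>' \<pi> =
     (\<Sum>j\<in>{1..n}. if ext_promo n R j \<pi> = \<pi>' then x j else 0)
     - (if \<pi> = \<pi>' then \<Sum>j\<in>{1..n}. x j else 0)"
proof (cases "\<pi> = \<pi>'")
  case True
  have "(\<Sum>j\<in>{1..n}. x j) = (\<Sum>j\<in>{1..n}. if ext_promo n R j \<pi> = \<pi> then x j else 0)
                           + (\<Sum>j\<in>{1..n}. if ext_promo n R j \<pi> \<noteq> \<pi> then x j else 0)"
    by (subst sum.distrib[symmetric]) (rule sum.cong, auto)
  moreover have "trans_matrix n R x \<pi> \<pi> = - (\<Sum>j\<in>{1..n}. if ext_promo n R j \<pi> \<noteq> \<pi> then x j else 0)"
    unfolding trans_matrix_def by (simp only: sum.inter_filter[OF finite_atLeastAtMost]) simp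
  ultimately show ?thesis using True by simp
next
  case False
  then show ?thesis
    unfolding trans_matrix_def by (simp only: sum.inter_filter[OF finite_atLeastAtMost]) simp
qed

theorem theorem4p3:
  fixes n :: nat and R :: "nat rel" and x :: "nat \<Rightarrow> real"
  assumes "natural_poset n R"
    and "\<forall>j \<in> {1..n}. x j > 0"
    and \<pi>': "\<pi>' \<in> lin_ext n R"
  shows "(\<Sum>\<pi> \<in> lin_ext n R. trans_matrix n R x \<pi>' \<pi>) = 0"
proof -
  have "(\<Sum>\<pi> \<in> lin_ext n R. trans_matrix n R x \<pi>' \<pi>)
      = (\<Sum>j\<in>{1..n}. \<Sum>\<pi> \<in> lin_ext n R. if ext_promo n R j \<pi> = \<pi>' then x j else 0)
        - (\<Sum>\<pi> \<in> lin_ext n R. if \<pi> = \<pi>' then \<Sum>j\<in>{1..n}. x j else 0)"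
    by (simp add: trans_matrix_eq sum_subtractf sum.swap[of _ "lin_ext n R"])
  also have "\<dots> = (\<Sum>j\<in>{1..n}. x j) - (\<Sum>j\<in>{1..n}. x j)"
    using \<pi>' by (simp add: sum_fiber_bij_betw[OF bij_betw_ext_promo_lin_ext finite_lin_ext \<pi>'] finite_lin_ext)
  finally show ?thesis by simp
qed

end
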